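(* The center $Z(X)$ of any $\mathsf{T_{z}S}$-closed semigroup $X$ is periodic.
   Context: $\mathsf{T_{z}S}$ is the class of Hausdorff zero-dimensional topological semigroups. A semigroup $X$ is $\mathsf{T_{z}S}$-closed if for every isomorphic topological embedding of $X$ (discrete topology) into some $Y\in\mathsf{T_{z}S}$ the image is closed in $Y$. $Z(X)=\{z\in X:\forall x\ (xz=zx)\}$. A semigroup is periodic if each element has some power $x^n$ ($n\ge1$) that is an idempotent. *)

theory Defs
  imports "HOL-Analysis.Analysis"
begin

definition zero_dimensional_space :: "'b topology \<Rightarrow> bool" where
  "zero_dimensional_space T \<longleftrightarrow>
     (\<forall>U x. openin T U \<and> x \<in> U \<longrightarrow>
        (\<exists>V. openin T V \<and> closedin T V \<and> x \<in> V \<and> V \<subseteq> U))"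

text \<open>A topological semigroup: carrier topspace T, multiplication m, associative on the
  carrier and jointly continuous (which in particular makes the carrier closed under m).\<close>
definition topological_semigroup :: "'b topology \<Rightarrow> ('b \<Rightarrow> 'b \<Rightarrow> 'b) \<Rightarrow> bool" where
  "topological_semigroup T m \<longleftrightarrow>
     (\<forall>a\<in>topspace T. \<forall>b\<in>topspace T. \<forall>c\<in>topspace T. m (m a b) c = m a (m b c)) \<and>
     continuous_map (prod_topology T T) T (\<lambda>p. m (fst p) (snd p))"

definition TzS :: "'b topology \<Rightarrow> ('b \<Rightarrow> 'b \<Rightarrow> 'b) \<Rightarrow> bool" where
  "TzS T m \<longleftrightarrow> topological_semigroup T m \<and> Hausdorff_space T \<and> zero_dimensional_space T"

definition iso_top_embedding :: "'b topology \<Rightarrow> ('b \<Rightarrow> 'b \<Rightarrow> 'b) \<Rightarrow> ('a::semigroup_mult \<Rightarrow> 'b) \<Rightarrow> bool" where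
  "iso_top_embedding T m h \<longleftrightarrow>
     inj h \<and> (\<forall>x y. h (x * y) = m (h x) (h y)) \<and>
     embedding_map (discrete_topology UNIV) T h"

text \<open>T_zS-closedness, with the ambient semigroups Y ranging over those whose carrier
  lives in the type 'b (selected by the type argument).\<close>
definition TzS_closed_in :: "'b itself \<Rightarrow> 'a::semigroup_mult itself \<Rightarrow> bool" where
  "TzS_closed_in TYPE('b) TYPE('a) \<longleftrightarrow>
     (\<forall>(T::'b topology) m (h::'a \<Rightarrow> 'b). TzS T m \<and> iso_top_embedding T m h \<longrightarrow> closedin T (range h))"

text \<open>Positive powers in a semigroup: spow x n = x^(n+1).\<close>
fun spow :: "'a::semigroup_mult \<Rightarrow> nat \<Rightarrow> 'a" where
  "spow x 0 = x"
| "spow x (Suc n) = x * spow x n"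

definition center :: "'a::semigroup_mult set" where
  "center = {z. \<forall>x. x * z = z * x}"

definition periodic_set :: "'a::semigroup_mult set \<Rightarrow> bool" where
  "periodic_set S \<longleftrightarrow> (\<forall>x\<in>S. \<exists>n. spow x n * spow x n = spow x n)"

end

theory Submission
  imports Defs
begin

(*
  Let z be central with no idempotent power. The principal ultrafilters of X, together with the
  filters generated by the tails {a z^n : n > k, k! dvd n}, form a semigroup under the product
  F G = filter generated by the sets A B (A in F, B in G); centrality of z is what keeps the
  product of two tail filters a tail filter. The sets {F. A in F} form a base, and every filter of
  the family decides every singleton and every tail, so these basic sets are clopen and the space
  is Hausdorff and zero-dimensional. The principal ultrafilters form a dense copy of the discrete
  semigroup X, and the tail filter of z is not principal, because a point in a tail of z forces
  z^c = z^(2c). Hence X is not closed.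
*)

section \<open>Powers\<close>

lemma spow_add: "spow x m * spow x n = spow x (m + n + 1)"
  by (induction m) (simp_all add: mult.assoc)

lemma spow_central_comm:
  assumes "z \<in> center"
  shows "y * spow z n = spow z n * y"
proof (induction n)
  case 0
  show ?case using assms by (simp add: center_def)
next
  case (Suc n)
  have "y * spow z (Suc n) = (y * z) * spow z n" by (simp add: mult.assoc)
  also have "\<dots> = z * (y * spow z n)" using assms by (simp add: center_def mult.assoc)
  also have "\<dots> = spow z (Suc n) * y" using Suc by (simp add: mult.assoc)
  finally show ?case .
qed

lemma periodic_after_repeat:
  fixes f :: "nat \<Rightarrow> 'a"
  assumes recurrence: "\<And>n. m \<le> n \<Longrightarrow> f (Suc n) = g (f n)"
    and repeat: "f (m + p) = f m"
    and "m \<le> n"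
  shows "f (n + j * p) = f n"
proof -
  have shift: "f (n + p) = f n" if "m \<le> n" for n
    using that
  proof (induction n rule: dec_induct)
    case base
    show ?case using repeat .
  next
    case (step n)
    then show ?case using recurrence by simp
  qed
  show ?thesis
  proof (induction j)
    case (Suc j)
    have "f (n + Suc j * p) = f (n + j * p + p)" by (simp add: algebra_simps)
    also have "\<dots> = f n" using shift[of "n + j * p"] Suc \<open>m \<le> n\<close> by simp
    finally show ?case .
  qed simp
qed

lemma spow_idempotent_if_repeats:
  assumes repeat: "spow z (m + p) = spow z m" and "0 < p"
  shows "\<exists>k. spow z k * spow z k = spow z k"
proof -
  define k where "k = Suc m * p - 1"
  have "Suc m * 1 \<le> Suc m * p" using \<open>0 < p\<close> by (intro mult_le_mono2) simp
  then have k: "m \<le> k" "k + 1 = Suc m * p" unfolding k_def by simp_all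
  have "spow z k * spow z k = spow z (k + (k + 1))" unfolding spow_add by (simp only: add.assoc)
  also have "\<dots> = spow z (k + Suc m * p)" by (simp only: k(2))
  also have "\<dots> = spow z k"
    by (rule periodic_after_repeat[where g = "(*) z"]) (use repeat k(1) in simp_all)
  finally show ?thesis by blast
qed

text \<open>ppow z n is z^n for n \<ge> 1; ppow z 0 is the junk value z.\<close>
definition ppow :: "'a::semigroup_mult \<Rightarrow> nat \<Rightarrow> 'a" where
  "ppow z n = spow z (n - 1)"

lemma ppow_add:
  assumes "0 < m" "0 < n"
  shows "ppow z m * ppow z n = ppow z (m + n)"
proof -
  have "m + n - 1 = (m - 1) + (n - 1) + 1" using assms by simp
  then show ?thesis unfolding ppow_def by (simp only: spow_add)
qed

lemma ppow_Suc: "0 < n \<Longrightarrow> ppow z (Suc n) = ppow z n * z"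
  using ppow_add[of n 1 z] by (simp add: ppow_def)

lemma mult_ppow: "0 < n \<Longrightarrow> z * ppow z n = spow z n"
  unfolding ppow_def by (cases n) simp_all

lemma ppow_central_comm: "z \<in> center \<Longrightarrow> y * ppow z n = ppow z n * y"
  unfolding ppow_def by (rule spow_central_comm)

section \<open>Filters and their product\<close>

definition proper_filter :: "'a set set \<Rightarrow> bool" where
  "proper_filter F \<longleftrightarrow> UNIV \<in> F \<and> {} \<notin> F \<and>
     (\<forall>A B. A \<in> F \<longrightarrow> A \<subseteq> B \<longrightarrow> B \<in> F) \<and> (\<forall>A\<in>F. \<forall>B\<in>F. A \<inter> B \<in> F)"

definition point_filter :: "'a \<Rightarrow> 'a set set" where
  "point_filter x = {A. x \<in> A}"

definition generated_filter :: "'a set set \<Rightarrow> 'a set set" where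
  "generated_filter Bs = {S. \<exists>B\<in>Bs. B \<subseteq> S}"

definition filter_mult :: "'a::times set set \<Rightarrow> 'a set set \<Rightarrow> 'a set set" where
  "filter_mult F G = {S. \<exists>A\<in>F. \<exists>B\<in>G. A * B \<subseteq> S}"

definition decides :: "'a set set \<Rightarrow> 'a set \<Rightarrow> bool" where
  "decides F D \<longleftrightarrow> D \<in> F \<or> (\<exists>B\<in>F. D \<inter> B = {})"

lemma proper_filter_generated:
  assumes "Bs \<noteq> {}" "{} \<notin> Bs" and directed: "\<And>B C. B \<in> Bs \<Longrightarrow> C \<in> Bs \<Longrightarrow> \<exists>D\<in>Bs. D \<subseteq> B \<inter> C"
  shows "proper_filter (generated_filter Bs)"
  unfolding proper_filter_def
proof (intro conjI allI impI ballI)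
  show "UNIV \<in> generated_filter Bs" "{} \<notin> generated_filter Bs"
    using assms(1,2) by (auto simp: generated_filter_def)
next
  fix A B assume "A \<in> generated_filter Bs" "A \<subseteq> B"
  then show "B \<in> generated_filter Bs" by (auto simp: generated_filter_def)
next
  fix A B assume "A \<in> generated_filter Bs" "B \<in> generated_filter Bs"
  then obtain A' B' where "A' \<in> Bs" "A' \<subseteq> A" "B' \<in> Bs" "B' \<subseteq> B"
    by (auto simp: generated_filter_def)
  moreover obtain D where "D \<in> Bs" "D \<subseteq> A' \<inter> B'"
    using directed \<open>A' \<in> Bs\<close> \<open>B' \<in> Bs\<close> by blast
  ultimately show "A \<inter> B \<in> generated_filter Bs" unfolding generated_filter_def by blast
qed

lemma point_filter_eq_generated: "point_filter x = generated_filter {{x}}"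
  by (auto simp: point_filter_def generated_filter_def)

lemma proper_point_filter: "proper_filter (point_filter x)"
  by (auto simp: proper_filter_def point_filter_def)

lemma proper_filter_eq_point_filter:
  assumes F: "proper_filter F" and "{x} \<in> F"
  shows "F = point_filter x"
proof (intro set_eqI iffI)
  fix S assume "S \<in> F"
  then have "S \<inter> {x} \<noteq> {}" using F \<open>{x} \<in> F\<close> unfolding proper_filter_def by metis
  then show "S \<in> point_filter x" by (simp add: point_filter_def)
next
  fix S assume "S \<in> point_filter x"
  then show "S \<in> F" using F \<open>{x} \<in> F\<close> unfolding proper_filter_def point_filter_def by blast
qed

lemma inj_point_filter: "inj point_filter"
  unfolding inj_def point_filter_def by (metis mem_Collect_eq singletonD singletonI)

lemma generated_filter_eqI:
  assumes "\<And>B. B \<in> Bs \<Longrightarrow> \<exists>C\<in>Cs. C \<subseteq> B" "\<And>C. C \<in> Cs \<Longrightarrow> \<exists>B\<in>Bs. B \<subseteq> C"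
  shows "generated_filter Bs = generated_filter Cs"
  unfolding generated_filter_def using assms by (auto; meson order_trans)

lemma filter_mult_generated:
  "filter_mult (generated_filter Bs) (generated_filter Cs) =
     generated_filter {B * C | B C. B \<in> Bs \<and> C \<in> Cs}"
proof (intro set_eqI iffI)
  fix S assume "S \<in> filter_mult (generated_filter Bs) (generated_filter Cs)"
  then obtain A A' B C where "B \<in> Bs" "B \<subseteq> A" "C \<in> Cs" "C \<subseteq> A'" "A * A' \<subseteq> S"
    unfolding filter_mult_def generated_filter_def by blast
  then have "B * C \<subseteq> S" by (meson order_trans set_times_mono2)
  then show "S \<in> generated_filter {B * C | B C. B \<in> Bs \<and> C \<in> Cs}"
    unfolding generated_filter_def using \<open>B \<in> Bs\<close> \<open>C \<in> Cs\<close> by blast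
next
  fix S assume "S \<in> generated_filter {B * C | B C. B \<in> Bs \<and> C \<in> Cs}"
  then obtain B C where "B \<in> Bs" "C \<in> Cs" "B * C \<subseteq> S" unfolding generated_filter_def by blast
  then show "S \<in> filter_mult (generated_filter Bs) (generated_filter Cs)"
    unfolding filter_mult_def generated_filter_def by blast
qed

lemma mem_filter_mult_left:
  "S \<in> filter_mult (filter_mult F G) H \<longleftrightarrow> (\<exists>A\<in>F. \<exists>B\<in>G. \<exists>C\<in>H. A * B * C \<subseteq> S)"
proof
  assume "S \<in> filter_mult (filter_mult F G) H"
  then obtain A B C D where "A \<in> F" "B \<in> G" "C \<in> H" "A * B \<subseteq> D" "D * C \<subseteq> S"
    unfolding filter_mult_def by blast
  then show "\<exists>A\<in>F. \<exists>B\<in>G. \<exists>C\<in>H. A * B * C \<subseteq> S" by (meson order_trans set_times_mono2 order_refl)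
qed (auto simp: filter_mult_def)

lemma mem_filter_mult_right:
  "S \<in> filter_mult F (filter_mult G H) \<longleftrightarrow> (\<exists>A\<in>F. \<exists>B\<in>G. \<exists>C\<in>H. A * (B * C) \<subseteq> S)"
proof
  assume "S \<in> filter_mult F (filter_mult G H)"
  then obtain A B C D where "A \<in> F" "B \<in> G" "C \<in> H" "B * C \<subseteq> D" "A * D \<subseteq> S"
    unfolding filter_mult_def by blast
  then show "\<exists>A\<in>F. \<exists>B\<in>G. \<exists>C\<in>H. A * (B * C) \<subseteq> S" by (meson order_trans set_times_mono2 order_refl)
qed (auto simp: filter_mult_def)

lemma filter_mult_assoc:
  fixes F G H :: "'a::semigroup_mult set set"
  shows "filter_mult (filter_mult F G) H = filter_mult F (filter_mult G H)"
  by (simp add: set_eq_iff mem_filter_mult_left mem_filter_mult_right mult.assoc)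

lemma filter_mult_point_filter: "filter_mult (point_filter x) (point_filter y) = point_filter (x * y)"
proof -
  have "{x} * {y} = {x * y}" by (auto simp: set_times_def)
  then show ?thesis by (simp add: point_filter_eq_generated filter_mult_generated)
qed

section \<open>The topology of a space of filters\<close>

definition basic_open :: "'a set set set \<Rightarrow> 'a set \<Rightarrow> 'a set set set" where
  "basic_open \<Phi> A = {F \<in> \<Phi>. A \<in> F}"

definition filter_open :: "'a set set set \<Rightarrow> 'a set set set \<Rightarrow> bool" where
  "filter_open \<Phi> U \<longleftrightarrow> U \<subseteq> \<Phi> \<and> (\<forall>F\<in>U. \<exists>A\<in>F. basic_open \<Phi> A \<subseteq> U)"

definition filter_topology :: "'a set set set \<Rightarrow> 'a set set topology" where
  "filter_topology \<Phi> = topology (filter_open \<Phi>)"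

locale filter_space =
  fixes \<Phi> :: "'a set set set"
  assumes proper: "F \<in> \<Phi> \<Longrightarrow> proper_filter F"
begin

lemma filter_UNIV: "F \<in> \<Phi> \<Longrightarrow> UNIV \<in> F"
  using proper unfolding proper_filter_def by blast

lemma filter_nonempty: "F \<in> \<Phi> \<Longrightarrow> A \<in> F \<Longrightarrow> A \<noteq> {}"
  using proper unfolding proper_filter_def by blast

lemma filter_mono: "F \<in> \<Phi> \<Longrightarrow> A \<in> F \<Longrightarrow> A \<subseteq> B \<Longrightarrow> B \<in> F"
  using proper unfolding proper_filter_def by blast

lemma filter_Int: "F \<in> \<Phi> \<Longrightarrow> A \<in> F \<Longrightarrow> B \<in> F \<Longrightarrow> A \<inter> B \<in> F"
  using proper unfolding proper_filter_def by blast

lemma basic_open_mono: "A \<subseteq> B \<Longrightarrow> basic_open \<Phi> A \<subseteq> basic_open \<Phi> B"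
  unfolding basic_open_def using filter_mono by blast

lemma basic_open_Int: "basic_open \<Phi> (A \<inter> B) = basic_open \<Phi> A \<inter> basic_open \<Phi> B"
  unfolding basic_open_def using filter_Int filter_mono by blast

lemma istopology_filter_open: "istopology (filter_open \<Phi>)"
  unfolding istopology_def
proof (intro conjI allI impI)
  fix U V assume U: "filter_open \<Phi> U" and V: "filter_open \<Phi> V"
  show "filter_open \<Phi> (U \<inter> V)"
    unfolding filter_open_def
  proof (intro conjI ballI)
    show "U \<inter> V \<subseteq> \<Phi>" using U by (auto simp: filter_open_def)
    fix F assume F: "F \<in> U \<inter> V"
    obtain A where A: "A \<in> F" "basic_open \<Phi> A \<subseteq> U"
      using U F unfolding filter_open_def by (meson IntD1)
    obtain B where B: "B \<in> F" "basic_open \<Phi> B \<subseteq> V"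
      using V F unfolding filter_open_def by (meson IntD2)
    have "A \<inter> B \<in> F" using filter_Int U F A(1) B(1) unfolding filter_open_def by blast
    moreover have "basic_open \<Phi> (A \<inter> B) \<subseteq> U \<inter> V"
      unfolding basic_open_Int using A(2) B(2) by blast
    ultimately show "\<exists>C\<in>F. basic_open \<Phi> C \<subseteq> U \<inter> V" ..
  qed
next
  fix \<U> assume \<U>: "\<forall>U\<in>\<U>. filter_open \<Phi> U"
  show "filter_open \<Phi> (\<Union>\<U>)"
    unfolding filter_open_def
  proof (intro conjI ballI)
    show "\<Union>\<U> \<subseteq> \<Phi>" using \<U> by (auto simp: filter_open_def)
    fix F assume "F \<in> \<Union>\<U>"
    then obtain U where "U \<in> \<U>" "F \<in> U" by blast
    then obtain A where "A \<in> F" "basic_open \<Phi> A \<subseteq> U" using \<U> unfolding filter_open_def by meson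
    then show "\<exists>A\<in>F. basic_open \<Phi> A \<subseteq> \<Union>\<U>" using \<open>U \<in> \<U>\<close> by blast
  qed
qed

lemma openin_filter_topology: "openin (filter_topology \<Phi>) U \<longleftrightarrow> filter_open \<Phi> U"
  unfolding filter_topology_def topology_inverse'[OF istopology_filter_open] ..

lemma openin_basic_open: "openin (filter_topology \<Phi>) (basic_open \<Phi> A)"
  unfolding openin_filter_topology filter_open_def
proof (intro conjI ballI)
  show "basic_open \<Phi> A \<subseteq> \<Phi>" by (auto simp: basic_open_def)
  fix F assume "F \<in> basic_open \<Phi> A"
  then have "A \<in> F" by (simp add: basic_open_def)
  then show "\<exists>B\<in>F. basic_open \<Phi> B \<subseteq> basic_open \<Phi> A" by blast
qed

lemma topspace_filter_topology: "topspace (filter_topology \<Phi>) = \<Phi>"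
proof
  show "topspace (filter_topology \<Phi>) \<subseteq> \<Phi>"
    using openin_topspace[of "filter_topology \<Phi>"]
    unfolding openin_filter_topology filter_open_def by (rule conjunct1)
  have "basic_open \<Phi> UNIV = \<Phi>" using filter_UNIV by (auto simp: basic_open_def)
  then show "\<Phi> \<subseteq> topspace (filter_topology \<Phi>)"
    using openin_subset[OF openin_basic_open[of UNIV]] by simp
qed

lemma closedin_basic_open:
  assumes "\<And>F. F \<in> \<Phi> \<Longrightarrow> decides F D"
  shows "closedin (filter_topology \<Phi>) (basic_open \<Phi> D)"
  unfolding closedin_def topspace_filter_topology openin_filter_topology filter_open_def
proof (intro conjI ballI)
  show "basic_open \<Phi> D \<subseteq> \<Phi>" "\<Phi> - basic_open \<Phi> D \<subseteq> \<Phi>" by (auto simp: basic_open_def)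
  fix G assume G: "G \<in> \<Phi> - basic_open \<Phi> D"
  then obtain B where B: "B \<in> G" "D \<inter> B = {}"
    using assms unfolding decides_def basic_open_def by blast
  have "H \<in> \<Phi> - basic_open \<Phi> D" if H: "H \<in> basic_open \<Phi> B" for H
  proof -
    have "H \<in> \<Phi>" "B \<in> H" using H by (simp_all add: basic_open_def)
    then have "D \<notin> H" using filter_Int filter_nonempty B(2) by (metis Int_commute)
    then show ?thesis using \<open>H \<in> \<Phi>\<close> by (simp add: basic_open_def)
  qed
  then show "\<exists>B\<in>G. basic_open \<Phi> B \<subseteq> \<Phi> - basic_open \<Phi> D" using B(1) by blast
qed

context
  fixes Ds :: "'a set set"
  assumes base: "\<And>F A. F \<in> \<Phi> \<Longrightarrow> A \<in> F \<Longrightarrow> \<exists>D\<in>Ds. D \<in> F \<and> D \<subseteq> A"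
    and decided: "\<And>F D. F \<in> \<Phi> \<Longrightarrow> D \<in> Ds \<Longrightarrow> decides F D"
begin

lemma zero_dimensional_filter_topology: "zero_dimensional_space (filter_topology \<Phi>)"
  unfolding zero_dimensional_space_def
proof (intro allI impI)
  fix U F assume "openin (filter_topology \<Phi>) U \<and> F \<in> U"
  then obtain A where "F \<in> \<Phi>" "A \<in> F" "basic_open \<Phi> A \<subseteq> U"
    unfolding openin_filter_topology filter_open_def by blast
  moreover obtain D where "D \<in> Ds" "D \<in> F" "D \<subseteq> A" using base calculation(1,2) by blast
  ultimately have "openin (filter_topology \<Phi>) (basic_open \<Phi> D)"
    "closedin (filter_topology \<Phi>) (basic_open \<Phi> D)"
    "F \<in> basic_open \<Phi> D" "basic_open \<Phi> D \<subseteq> U"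
    using openin_basic_open closedin_basic_open[OF decided] basic_open_mono[of D A]
    by (auto simp: basic_open_def)
  then show "\<exists>V. openin (filter_topology \<Phi>) V \<and> closedin (filter_topology \<Phi>) V \<and> F \<in> V \<and> V \<subseteq> U"
    by blast
qed

lemma Hausdorff_filter_topology: "Hausdorff_space (filter_topology \<Phi>)"
proof -
  have separate: "\<exists>U V. openin (filter_topology \<Phi>) U \<and> openin (filter_topology \<Phi>) V \<and>
      F \<in> U \<and> G \<in> V \<and> disjnt U V"
    if "F \<in> \<Phi>" "G \<in> \<Phi>" "S \<in> F" "S \<notin> G" for F G S
  proof -
    obtain D where D: "D \<in> Ds" "D \<in> F" "D \<subseteq> S" using base \<open>F \<in> \<Phi>\<close> \<open>S \<in> F\<close> by blast
    then have "D \<notin> G" using filter_mono \<open>G \<in> \<Phi>\<close> \<open>S \<notin> G\<close> by blast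
    have "openin (filter_topology \<Phi>) (\<Phi> - basic_open \<Phi> D)"
      using closedin_basic_open[OF decided] D(1)
      unfolding closedin_def topspace_filter_topology by blast
    moreover have "F \<in> basic_open \<Phi> D" "G \<in> \<Phi> - basic_open \<Phi> D"
      using D(2) \<open>D \<notin> G\<close> that(1,2) by (auto simp: basic_open_def)
    moreover have "disjnt (basic_open \<Phi> D) (\<Phi> - basic_open \<Phi> D)" by (simp add: disjnt_def)
    ultimately show ?thesis using openin_basic_open by blast
  qed
  show ?thesis
    unfolding Hausdorff_space_def topspace_filter_topology
  proof (intro allI impI)
    fix F G assume FG: "F \<in> \<Phi> \<and> G \<in> \<Phi> \<and> F \<noteq> G"
    then consider S where "S \<in> F" "S \<notin> G" | S where "S \<in> G" "S \<notin> F" by blast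
    then show "\<exists>U V. openin (filter_topology \<Phi>) U \<and> openin (filter_topology \<Phi>) V \<and>
        F \<in> U \<and> G \<in> V \<and> disjnt U V"
    proof cases
      case 1
      then show ?thesis using FG by (intro separate) auto
    next
      case 2
      then have "\<exists>U V. openin (filter_topology \<Phi>) U \<and> openin (filter_topology \<Phi>) V \<and>
          G \<in> U \<and> F \<in> V \<and> disjnt U V"
        using FG by (intro separate) auto
      then show ?thesis by (meson disjnt_sym)
    qed
  qed
qed

end

lemma embedding_map_point_filter:
  assumes "range point_filter \<subseteq> \<Phi>"
  shows "embedding_map (discrete_topology UNIV) (filter_topology \<Phi>) point_filter"
proof (rule injective_open_imp_embedding_map)
  show "continuous_map (discrete_topology UNIV) (filter_topology \<Phi>) point_filter"
    using assms by (simp add: topspace_filter_topology image_subset_iff)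
  show "inj_on point_filter (topspace (discrete_topology UNIV))"
    using inj_point_filter by (simp add: inj_on_def inj_def)
  have nbhd: "basic_open \<Phi> {x} \<subseteq> point_filter ` U" if "x \<in> U" for x U
  proof
    fix F assume "F \<in> basic_open \<Phi> {x}"
    then have "F \<in> \<Phi>" "{x} \<in> F" by (simp_all add: basic_open_def)
    then have "F = point_filter x" by (intro proper_filter_eq_point_filter proper)
    then show "F \<in> point_filter ` U" using that by blast
  qed
  show "open_map (discrete_topology UNIV) (filter_topology \<Phi>) point_filter"
    unfolding open_map_def openin_filter_topology filter_open_def
  proof (intro allI impI conjI ballI)
    fix U :: "'a set" and F
    show "point_filter ` U \<subseteq> \<Phi>" using assms by blast
    assume "F \<in> point_filter ` U"
    then obtain x where "x \<in> U" "F = point_filter x" by blast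
    moreover have "{x} \<in> point_filter x" by (simp add: point_filter_def)
    ultimately show "\<exists>A\<in>F. basic_open \<Phi> A \<subseteq> point_filter ` U" using nbhd by blast
  qed
qed

text \<open>The point filters are dense: every basic open set contains one.\<close>
lemma closedin_range_point_filter_iff:
  assumes "range point_filter \<subseteq> \<Phi>"
  shows "closedin (filter_topology \<Phi>) (range point_filter) \<longleftrightarrow> \<Phi> = range point_filter"
proof
  assume closed: "closedin (filter_topology \<Phi>) (range point_filter)"
  have "F \<in> range point_filter" if "F \<in> \<Phi>" for F
  proof (rule ccontr)
    assume "F \<notin> range point_filter"
    then have "F \<in> \<Phi> - range point_filter" using \<open>F \<in> \<Phi>\<close> by blast
    then obtain A where A: "A \<in> F" "basic_open \<Phi> A \<subseteq> \<Phi> - range point_filter"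
      using closed unfolding closedin_def topspace_filter_topology openin_filter_topology filter_open_def
      by meson
    then obtain x where "x \<in> A" using filter_nonempty \<open>F \<in> \<Phi>\<close> by blast
    then have "point_filter x \<in> basic_open \<Phi> A"
      using assms by (auto simp: basic_open_def point_filter_def)
    then show False using A(2) by blast
  qed
  then show "\<Phi> = range point_filter" using assms by blast
next
  assume "\<Phi> = range point_filter"
  then show "closedin (filter_topology \<Phi>) (range point_filter)"
    using closedin_topspace topspace_filter_topology by metis
qed

end

lemma continuous_map_filter_mult:
  fixes \<Phi> :: "'b::times set set set"
  assumes "filter_space \<Phi>" and closed: "\<And>F G. F \<in> \<Phi> \<Longrightarrow> G \<in> \<Phi> \<Longrightarrow> filter_mult F G \<in> \<Phi>"
  shows "continuous_map (prod_topology (filter_topology \<Phi>) (filter_topology \<Phi>)) (filter_topology \<Phi>)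
           (\<lambda>p. filter_mult (fst p) (snd p))"
proof -
  interpret filter_space \<Phi> by fact
  show ?thesis
    unfolding continuous_map_openin_preimage_eq
  proof (intro conjI allI impI)
    show "(\<lambda>p. filter_mult (fst p) (snd p)) \<in> topspace (prod_topology (filter_topology \<Phi>) (filter_topology \<Phi>))
        \<rightarrow> topspace (filter_topology \<Phi>)"
      using closed by (auto simp: topspace_filter_topology)
  next
    fix U assume U: "openin (filter_topology \<Phi>) U"
    let ?P = "topspace (prod_topology (filter_topology \<Phi>) (filter_topology \<Phi>)) \<inter>
      (\<lambda>p. filter_mult (fst p) (snd p)) -` U"
    show "openin (prod_topology (filter_topology \<Phi>) (filter_topology \<Phi>)) ?P"
      unfolding openin_prod_topology_alt
    proof (intro allI impI)
      fix F G assume "(F, G) \<in> ?P"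
      then have FG: "F \<in> \<Phi>" "G \<in> \<Phi>" "filter_mult F G \<in> U"
        by (auto simp: topspace_filter_topology)
      then obtain S where S: "S \<in> filter_mult F G" "basic_open \<Phi> S \<subseteq> U"
        using U unfolding openin_filter_topology filter_open_def by meson
      then obtain A B where AB: "A \<in> F" "B \<in> G" "A * B \<subseteq> S" unfolding filter_mult_def by blast
      have "(F', G') \<in> ?P" if "F' \<in> basic_open \<Phi> A" "G' \<in> basic_open \<Phi> B" for F' G'
      proof -
        have "F' \<in> \<Phi>" "G' \<in> \<Phi>" "A \<in> F'" "B \<in> G'" using that by (simp_all add: basic_open_def)
        then have "filter_mult F' G' \<in> basic_open \<Phi> S"
          using closed AB(3) unfolding basic_open_def filter_mult_def by blast
        then show ?thesis using S(2) \<open>F' \<in> \<Phi>\<close> \<open>G' \<in> \<Phi>\<close> by (auto simp: topspace_filter_topology)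
      qed
      then have "basic_open \<Phi> A \<times> basic_open \<Phi> B \<subseteq> ?P" by auto
      moreover have "F \<in> basic_open \<Phi> A" "G \<in> basic_open \<Phi> B"
        using FG AB by (simp_all add: basic_open_def)
      ultimately show "\<exists>V W. openin (filter_topology \<Phi>) V \<and> openin (filter_topology \<Phi>) W \<and>
          F \<in> V \<and> G \<in> W \<and> V \<times> W \<subseteq> ?P"
        using openin_basic_open by blast
    qed
  qed
qed

section \<open>Tail filters of a central element\<close>

definition fact_multiples :: "nat \<Rightarrow> nat set" where
  "fact_multiples k = {n. k < n \<and> fact k dvd n}"

lemma fact_multiples_antimono: "k \<le> l \<Longrightarrow> fact_multiples l \<subseteq> fact_multiples k"
proof
  fix n assume "k \<le> l" "n \<in> fact_multiples l"
  moreover have "fact k dvd (fact l :: nat)" using \<open>k \<le> l\<close> by (rule fact_dvd)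
  ultimately show "n \<in> fact_multiples k"
    unfolding fact_multiples_def by (auto intro: dvd_trans)
qed

lemma fact_multiples_pos: "n \<in> fact_multiples k \<Longrightarrow> 0 < n"
  by (simp add: fact_multiples_def)

lemma fact_multiples_witness: "fact k * Suc k \<in> fact_multiples k"
proof -
  have "Suc k * 1 \<le> Suc k * fact k" by (intro mult_le_mono2) (simp add: Suc_leI)
  then show ?thesis by (simp add: fact_multiples_def mult.commute)
qed

lemma fact_multiples_add: "m \<in> fact_multiples k \<Longrightarrow> n \<in> fact_multiples k \<Longrightarrow> m + n \<in> fact_multiples k"
  by (simp add: fact_multiples_def)

lemma fact_multiples_diff:
  assumes m: "m \<in> fact_multiples k" and n: "n \<in> fact_multiples (m + k)"
  shows "n - m \<in> fact_multiples k"
proof -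
  have "fact k dvd n" using n fact_multiples_antimono[of k "m + k"] by (auto simp: fact_multiples_def)
  then have "fact k dvd n - m" using m by (simp add: fact_multiples_def dvd_diff_nat)
  then show ?thesis using n by (auto simp: fact_multiples_def)
qed

lemma dvd_fact_multiples: "0 < p \<Longrightarrow> p \<le> k \<Longrightarrow> n \<in> fact_multiples k \<Longrightarrow> p dvd n"
  unfolding fact_multiples_def by (metis Suc_leI dvd_fact dvd_trans mem_Collect_eq One_nat_def)

text \<open>The factorials make every period p eventually divide all exponents of a tail.\<close>
definition tail :: "'a::semigroup_mult \<Rightarrow> 'a \<Rightarrow> nat \<Rightarrow> 'a set" where
  "tail z a k = (\<lambda>n. a * ppow z n) ` fact_multiples k"

definition tail_filter :: "'a::semigroup_mult \<Rightarrow> 'a \<Rightarrow> 'a set set" where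
  "tail_filter z a = generated_filter (range (tail z a))"

definition tail_space :: "'a::semigroup_mult \<Rightarrow> 'a set set set" where
  "tail_space z = range point_filter \<union> range (tail_filter z)"

definition tail_base :: "'a::semigroup_mult \<Rightarrow> 'a set set" where
  "tail_base z = {D. (\<exists>x. D = {x}) \<or> (\<exists>a k. D = tail z a k)}"

lemma tail_antimono: "k \<le> l \<Longrightarrow> tail z a l \<subseteq> tail z a k"
  unfolding tail_def by (intro image_mono fact_multiples_antimono)

lemma tail_nonempty: "tail z a k \<noteq> {}"
  using fact_multiples_witness by (auto simp: tail_def)

lemma tail_in_tail_filter: "tail z a k \<in> tail_filter z a"
  by (auto simp: tail_filter_def generated_filter_def)

lemma proper_tail_filter: "proper_filter (tail_filter z a)"
  unfolding tail_filter_def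
proof (rule proper_filter_generated)
  show "range (tail z a) \<noteq> {}" by simp
  show "{} \<notin> range (tail z a)" using tail_nonempty by (metis rangeE)
  fix B C assume "B \<in> range (tail z a)" "C \<in> range (tail z a)"
  then obtain k l where "B = tail z a k" "C = tail z a l" by blast
  then have "tail z a (max k l) \<subseteq> B \<inter> C" by (intro Int_greatest) (simp_all add: tail_antimono)
  then show "\<exists>D\<in>range (tail z a). D \<subseteq> B \<inter> C" by (metis rangeI)
qed

lemma filter_space_tail_space: "filter_space (tail_space z)"
  by unfold_locales (auto simp: tail_space_def proper_point_filter proper_tail_filter)

lemma ppow_mult_ppow_central:
  assumes z: "z \<in> center" and "0 < m" "0 < n"
  shows "(a * ppow z m) * (b * ppow z n) = (a * b) * ppow z (m + n)"
proof -
  have "(a * ppow z m) * (b * ppow z n) = a * (ppow z m * b) * ppow z n" by (simp only: mult.assoc)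
  also have "\<dots> = a * (b * ppow z m) * ppow z n" by (simp only: ppow_central_comm[OF z])
  also have "\<dots> = (a * b) * (ppow z m * ppow z n)" by (simp only: mult.assoc)
  also have "\<dots> = (a * b) * ppow z (m + n)" by (simp only: ppow_add[OF assms(2,3)])
  finally show ?thesis .
qed

lemma singleton_times_tail: "{x} * tail z b k = tail z (x * b) k"
  unfolding set_times_def tail_def by (auto simp: mult.assoc)

lemma tail_times_singleton:
  assumes "z \<in> center"
  shows "tail z a k * {y} = tail z (a * y) k"
proof -
  have "a * ppow z n * y = a * y * ppow z n" for n
    by (metis mult.assoc ppow_central_comm[OF assms])
  then show ?thesis unfolding set_times_def tail_def by auto
qed

lemma tail_times_tail_subset:
  assumes "z \<in> center"
  shows "tail z a k * tail z b k \<subseteq> tail z (a * b) k"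
proof
  fix x assume "x \<in> tail z a k * tail z b k"
  then obtain m n where mn: "m \<in> fact_multiples k" "n \<in> fact_multiples k"
      "x = (a * ppow z m) * (b * ppow z n)"
    by (auto simp: set_times_def tail_def)
  then have "x = (a * b) * ppow z (m + n)"
    using ppow_mult_ppow_central[OF assms fact_multiples_pos fact_multiples_pos] by simp
  then show "x \<in> tail z (a * b) k" using fact_multiples_add[OF mn(1,2)] by (simp add: tail_def)
qed

lemma tail_subset_tail_times_tail:
  assumes "z \<in> center" and m: "m \<in> fact_multiples k"
  shows "tail z (a * b) (m + k) \<subseteq> tail z a k * tail z b k"
proof
  fix x assume "x \<in> tail z (a * b) (m + k)"
  then obtain n where n: "n \<in> fact_multiples (m + k)" "x = (a * b) * ppow z n"
    by (auto simp: tail_def)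
  have d: "n - m \<in> fact_multiples k" using fact_multiples_diff[OF m n(1)] .
  have "m + (n - m) = n" using n(1) by (auto simp: fact_multiples_def)
  then have "x = (a * b) * ppow z (m + (n - m))" using n(2) by simp
  also have "\<dots> = (a * ppow z m) * (b * ppow z (n - m))"
    by (simp only: ppow_mult_ppow_central[OF assms(1) fact_multiples_pos[OF m] fact_multiples_pos[OF d]])
  finally have "x = (a * ppow z m) * (b * ppow z (n - m))" .
  then show "x \<in> tail z a k * tail z b k"
    using m d unfolding tail_def by (blast intro: set_times_intro)
qed

lemma filter_mult_point_tail: "filter_mult (point_filter x) (tail_filter z b) = tail_filter z (x * b)"
proof -
  have "{B * C | B C. B \<in> {{x}} \<and> C \<in> range (tail z b)} = range (tail z (x * b))"
    using singleton_times_tail by blast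
  then show ?thesis by (simp add: point_filter_eq_generated tail_filter_def filter_mult_generated)
qed

lemma filter_mult_tail_point:
  assumes "z \<in> center"
  shows "filter_mult (tail_filter z a) (point_filter y) = tail_filter z (a * y)"
proof -
  have "{B * C | B C. B \<in> range (tail z a) \<and> C \<in> {{y}}} = range (tail z (a * y))"
    using tail_times_singleton[OF assms] by blast
  then show ?thesis by (simp add: point_filter_eq_generated tail_filter_def filter_mult_generated)
qed

lemma filter_mult_tail_tail:
  assumes "z \<in> center"
  shows "filter_mult (tail_filter z a) (tail_filter z b) = tail_filter z (a * b)"
  unfolding tail_filter_def filter_mult_generated
proof (rule generated_filter_eqI)
  fix B assume "B \<in> {B * C | B C. B \<in> range (tail z a) \<and> C \<in> range (tail z b)}"
  then obtain k l where B: "B = tail z a k * tail z b l" by blast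
  let ?m = "max k l"
  have "tail z (a * b) (fact ?m * Suc ?m + ?m) \<subseteq> tail z a ?m * tail z b ?m"
    using tail_subset_tail_times_tail[OF assms fact_multiples_witness] .
  also have "\<dots> \<subseteq> B" unfolding B by (intro set_times_mono2 tail_antimono) simp_all
  finally show "\<exists>C\<in>range (tail z (a * b)). C \<subseteq> B" by blast
next
  fix C assume "C \<in> range (tail z (a * b))"
  then obtain k where "C = tail z (a * b) k" by blast
  then show "\<exists>B\<in>{B * C | B C. B \<in> range (tail z a) \<and> C \<in> range (tail z b)}. B \<subseteq> C"
    using tail_times_tail_subset[OF assms] by blast
qed

lemma filter_mult_tail_space:
  assumes "z \<in> center" "F \<in> tail_space z" "G \<in> tail_space z"
  shows "filter_mult F G \<in> tail_space z"
  using assms(2,3) unfolding tail_space_def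
  by (auto simp: filter_mult_point_filter filter_mult_point_tail
      filter_mult_tail_point[OF assms(1)] filter_mult_tail_tail[OF assms(1)])

lemma tail_orbit_periodic:
  assumes repeat: "b * ppow z (m + p) = b * ppow z m" and "0 < m" "m \<le> n"
  shows "b * ppow z (n + j * p) = b * ppow z n"
proof (rule periodic_after_repeat[where g = "\<lambda>y. y * z"])
  fix i assume "m \<le> i"
  then show "b * ppow z (Suc i) = b * ppow z i * z"
    using \<open>0 < m\<close> by (simp add: ppow_Suc mult.assoc)
qed (use assms in simp_all)

text \<open>A point in every tail of b makes the orbit of b eventually periodic; the factorials in the
  exponents then force a whole tail onto that point.\<close>
lemma tail_subset_singleton:
  assumes x: "\<And>k. x \<in> tail z b k"
  shows "\<exists>l. tail z b l \<subseteq> {x}"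
proof -
  obtain m where m: "m \<in> fact_multiples 0" "x = b * ppow z m" using x[of 0] by (auto simp: tail_def)
  obtain m' where m': "m' \<in> fact_multiples m" "x = b * ppow z m'" using x[of m] by (auto simp: tail_def)
  define p where "p = m' - m"
  have p: "0 < p" "m' = m + p" using m'(1) by (auto simp: p_def fact_multiples_def)
  have "0 < m" using m(1) by (rule fact_multiples_pos)
  have repeat: "b * ppow z (m + p) = b * ppow z m" using m(2) m'(2) p(2) by simp
  obtain l where l: "l \<in> fact_multiples (max p m)" "x = b * ppow z l"
    using x[of "max p m"] by (auto simp: tail_def)
  have "p \<le> l" "m \<le> l" using l(1) by (auto simp: fact_multiples_def)
  have "p dvd l" using dvd_fact_multiples[OF p(1) _ l(1)] by simp
  have "y = x" if y: "y \<in> tail z b l" for y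
  proof -
    obtain n where n: "n \<in> fact_multiples l" "y = b * ppow z n" using y by (auto simp: tail_def)
    have "p dvd n" using dvd_fact_multiples[OF p(1) \<open>p \<le> l\<close> n(1)] .
    with \<open>p dvd l\<close> obtain j where "n - l = j * p" by (metis dvd_diff_nat dvdE mult.commute)
    then have "n = l + j * p" using n(1) by (auto simp: fact_multiples_def)
    then show "y = x"
      using n(2) l(2) tail_orbit_periodic[OF repeat \<open>0 < m\<close> \<open>m \<le> l\<close>] by simp
  qed
  then show ?thesis by blast
qed

lemma tail_subset_tail_if_meet:
  assumes meet: "a * ppow z n = b * ppow z m" and n: "n \<in> fact_multiples k" and m: "m \<in> fact_multiples k"
  shows "tail z b (m + k) \<subseteq> tail z a k"
proof
  fix x assume "x \<in> tail z b (m + k)"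
  then obtain j where j: "j \<in> fact_multiples (m + k)" "x = b * ppow z j" by (auto simp: tail_def)
  have d: "j - m \<in> fact_multiples k" using fact_multiples_diff[OF m j(1)] .
  have "m + (j - m) = j" using j(1) by (auto simp: fact_multiples_def)
  then have "x = b * ppow z (m + (j - m))" using j(2) by simp
  also have "\<dots> = b * (ppow z m * ppow z (j - m))"
    by (simp only: ppow_add[OF fact_multiples_pos[OF m] fact_multiples_pos[OF d]])
  also have "\<dots> = a * (ppow z n * ppow z (j - m))" using meet by (simp add: mult.assoc[symmetric])
  also have "\<dots> = a * ppow z (n + (j - m))"
    by (simp only: ppow_add[OF fact_multiples_pos[OF n] fact_multiples_pos[OF d]])
  finally show "x \<in> tail z a k" using fact_multiples_add[OF n d] by (simp add: tail_def)
qed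

lemma point_filter_decides: "decides (point_filter y) D"
proof (cases "y \<in> D")
  case False
  then have "D \<inter> {y} = {}" by blast
  moreover have "{y} \<in> point_filter y" by (simp add: point_filter_def)
  ultimately show ?thesis unfolding decides_def by blast
qed (simp add: decides_def point_filter_def)

lemma tail_filter_decides_singleton: "decides (tail_filter z b) {x}"
proof (cases "\<forall>k. x \<in> tail z b k")
  case True
  then obtain l where "tail z b l \<subseteq> {x}" using tail_subset_singleton by blast
  then show ?thesis unfolding decides_def tail_filter_def generated_filter_def by blast
next
  case False
  then obtain k where "{x} \<inter> tail z b k = {}" by blast
  then show ?thesis unfolding decides_def using tail_in_tail_filter by blast
qed

lemma tail_filter_decides_tail: "decides (tail_filter z b) (tail z a k)"
proof (cases "tail z a k \<inter> tail z b k = {}")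
  case True
  then show ?thesis unfolding decides_def using tail_in_tail_filter by blast
next
  case False
  then obtain n m where "n \<in> fact_multiples k" "m \<in> fact_multiples k" "a * ppow z n = b * ppow z m"
    by (auto simp: tail_def)
  then have "tail z b (m + k) \<subseteq> tail z a k" by (intro tail_subset_tail_if_meet)
  then show ?thesis unfolding decides_def tail_filter_def generated_filter_def by blast
qed

lemma tail_space_base:
  assumes "F \<in> tail_space z" "A \<in> F"
  shows "\<exists>D\<in>tail_base z. D \<in> F \<and> D \<subseteq> A"
proof -
  consider y where "F = point_filter y" | b where "F = tail_filter z b"
    using assms(1) unfolding tail_space_def by blast
  then show ?thesis
  proof cases
    case 1
    then have "{y} \<in> tail_base z" "{y} \<in> F" "{y} \<subseteq> A"
      using assms(2) by (auto simp: tail_base_def point_filter_def)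
    then show ?thesis by blast
  next
    case 2
    then obtain k where "tail z b k \<subseteq> A"
      using assms(2) unfolding tail_filter_def generated_filter_def by blast
    moreover have "tail z b k \<in> tail_base z" "tail z b k \<in> F"
      using 2 tail_in_tail_filter by (auto simp: tail_base_def)
    ultimately show ?thesis by blast
  qed
qed

lemma tail_space_decides:
  assumes "F \<in> tail_space z" "D \<in> tail_base z"
  shows "decides F D"
proof -
  have "decides (tail_filter z b) D" for b
  proof -
    consider x where "D = {x}" | a k where "D = tail z a k"
      using assms(2) unfolding tail_base_def by blast
    then show ?thesis
      by cases (simp_all add: tail_filter_decides_singleton tail_filter_decides_tail)
  qed
  then show ?thesis
    using assms(1) point_filter_decides unfolding tail_space_def by (metis UnE rangeE)
qed

lemma TzS_tail_space:
  assumes "z \<in> center"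
  shows "TzS (filter_topology (tail_space z)) filter_mult"
proof -
  interpret filter_space "tail_space z" by (rule filter_space_tail_space)
  have "continuous_map (prod_topology (filter_topology (tail_space z)) (filter_topology (tail_space z)))
      (filter_topology (tail_space z)) (\<lambda>p. filter_mult (fst p) (snd p))"
    by (rule continuous_map_filter_mult[OF filter_space_tail_space filter_mult_tail_space[OF assms]])
  moreover have "Hausdorff_space (filter_topology (tail_space z))"
    by (rule Hausdorff_filter_topology[OF tail_space_base tail_space_decides])
  moreover have "zero_dimensional_space (filter_topology (tail_space z))"
    by (rule zero_dimensional_filter_topology[OF tail_space_base tail_space_decides])
  ultimately show ?thesis
    unfolding TzS_def topological_semigroup_def by (simp add: filter_mult_assoc)
qed

lemma iso_top_embedding_point_filter:
  "iso_top_embedding (filter_topology (tail_space z)) filter_mult point_filter"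
  unfolding iso_top_embedding_def
proof (intro conjI allI)
  show "inj point_filter" by (rule inj_point_filter)
  fix x y :: 'a
  show "point_filter (x * y) = filter_mult (point_filter x) (point_filter y)"
    by (simp add: filter_mult_point_filter)
next
  show "embedding_map (discrete_topology UNIV) (filter_topology (tail_space z)) point_filter"
    by (rule filter_space.embedding_map_point_filter[OF filter_space_tail_space])
      (auto simp: tail_space_def)
qed

lemma tail_filter_eq_point_filter_imp_idempotent_power:
  assumes "tail_filter z z = point_filter x"
  shows "\<exists>n. spow z n * spow z n = spow z n"
proof -
  obtain k where k: "tail z z k \<subseteq> {x}"
    using assms unfolding tail_filter_def generated_filter_def point_filter_def by blast
  define c where "c = fact k * Suc k"
  have c: "c \<in> fact_multiples k" "c + c \<in> fact_multiples k"
    unfolding c_def using fact_multiples_witness fact_multiples_add by blast+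
  then have "z * ppow z (c + c) = z * ppow z c" using k by (auto simp: tail_def)
  then have "spow z (c + c) = spow z c"
    using fact_multiples_pos[OF c(1)] fact_multiples_pos[OF c(2)] by (simp add: mult_ppow)
  then show ?thesis using spow_idempotent_if_repeats fact_multiples_pos[OF c(1)] by blast
qed

theorem lemma5p4:
  assumes "TzS_closed_in TYPE('a set set) TYPE('a::semigroup_mult)"
  shows "periodic_set (center :: 'a set)"
proof (rule ccontr)
  assume "\<not> periodic_set (center :: 'a set)"
  then obtain z :: 'a where z: "z \<in> center" and aperiodic: "\<forall>n. spow z n * spow z n \<noteq> spow z n"
    unfolding periodic_set_def by blast
  have "closedin (filter_topology (tail_space z)) (range point_filter)"
    using assms TzS_tail_space[OF z] iso_top_embedding_point_filter
    unfolding TzS_closed_in_def by blast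
  moreover have "range point_filter \<subseteq> tail_space z" by (simp add: tail_space_def)
  ultimately have "tail_space z = range point_filter"
    using filter_space.closedin_range_point_filter_iff[OF filter_space_tail_space] by blast
  moreover have "tail_filter z z \<in> tail_space z" by (simp add: tail_space_def)
  ultimately obtain x where "tail_filter z z = point_filter x" by auto
  then show False
    using tail_filter_eq_point_filter_imp_idempotent_power aperiodic by blast
qed

end
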